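(* Let $X$ be a ball quasi-Banach function space on $\mathbb R^n$ and $\theta\in(0,1)$. Assume that there exists $r\in(0,\infty)$ such that $X^{1/r}$ is a ball Banach function space. Then $$(X,L^\infty(\mathbb R^n))_{\theta,\infty}=(WX)^{1/(1-\theta)}$$ with equivalent quasi-norms.
   Context: A ball quasi-Banach function space is a quasi-Banach space $X$ of measurable functions on $\mathbb R^n$ such that: $\|f\|_X=0$ implies $f=0$ a.e.; $|g|\le|f|$ a.e. implies $\|g\|_X\le\|f\|_X$; $0\le f_m\uparrow f$ a.e. implies $\|f_m\|_X\uparrow\|f\|_X$; and $\mathbf 1_B\in X$ for every ball $B$. It is a ball Banach function space if moreover $\|\cdot\|_X$ satisfies the triangle inequality and for every ball $B$ there is $C_B$ with $\int_B|f|\le C_B\|f\|_X$. For $p\in(0,\infty)$, $Y^p:=\{f:|f|^p\in Y\}$ with $\|f\|_{Y^p}:=\||f|^p\|_Y^{1/p}$. $WX$ is the set of measurable $f$ with $\|f\|_{WX}:=\sup_{\alpha>0}\alpha\|\mathbf 1_{\{x:|f(x)|>\alpha\}}\|_X<\infty$. Real interpolation: $K(t,f;X_0,X_1):=\inf\{\|f_0\|_{X_0}+t\|f_1\|_{X_1}:f=f_0+f_1,\ f_i\in X_i\}$, and $(X_0,X_1)_{\theta,\infty}$ is the set of $f\in X_0+X_1$ with $\|f\|_{\theta,\infty}:=\sup_{t>0}t^{-\theta}K(t,f;X_0,X_1)<\infty$. *)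

theory Defs
  imports "HOL-Analysis.Analysis"
begin

text \<open>A (quasi-)norm on measurable functions on the Euclidean space 'a is modelled as an
extended-nonnegative valued functional N; the space is X = {f measurable. N f < top}.\<close>

definition epowr :: "ennreal \<Rightarrow> real \<Rightarrow> ennreal" where
  "epowr x p = (if x = top then top else ennreal (enn2real x powr p))"

definition quasi_banach_fs :: "(('a::euclidean_space \<Rightarrow> real) \<Rightarrow> ennreal) \<Rightarrow> bool" where
  "quasi_banach_fs N \<longleftrightarrow>
     (\<forall>f c. f \<in> borel_measurable lebesgue \<longrightarrow> N (\<lambda>x. c * f x) = ennreal \<bar>c\<bar> * N f) \<and>
     (\<exists>K::real. K \<ge> 1 \<and> (\<forall>f g. f \<in> borel_measurable lebesgue \<longrightarrow> g \<in> borel_measurable lebesgue \<longrightarrow>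
         N (\<lambda>x. f x + g x) \<le> ennreal K * (N f + N g))) \<and>
     (\<forall>F::nat \<Rightarrow> 'a \<Rightarrow> real.
        (\<forall>k. F k \<in> borel_measurable lebesgue \<and> N (F k) < top) \<longrightarrow>
        (\<forall>e>0. \<exists>M. \<forall>k\<ge>M. \<forall>l\<ge>M. N (\<lambda>x. F k x - F l x) < ennreal e) \<longrightarrow>
        (\<exists>f \<in> borel_measurable lebesgue. N f < top \<and> (\<lambda>k. N (\<lambda>x. F k x - f x)) \<longlonglongrightarrow> 0))"

definition ball_quasi_banach_fs :: "(('a::euclidean_space \<Rightarrow> real) \<Rightarrow> ennreal) \<Rightarrow> bool" where
  "ball_quasi_banach_fs N \<longleftrightarrow>
     quasi_banach_fs N \<and>
     (\<forall>f \<in> borel_measurable lebesgue. N f = 0 \<longrightarrow> (AE x in lebesgue. f x = 0)) \<and>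
     (\<forall>f g. f \<in> borel_measurable lebesgue \<longrightarrow> g \<in> borel_measurable lebesgue \<longrightarrow>
        (AE x in lebesgue. \<bar>g x\<bar> \<le> \<bar>f x\<bar>) \<longrightarrow> N g \<le> N f) \<and>
     (\<forall>(F::nat \<Rightarrow> 'a \<Rightarrow> real) f. (\<forall>m. F m \<in> borel_measurable lebesgue) \<longrightarrow> f \<in> borel_measurable lebesgue \<longrightarrow>
        (AE x in lebesgue. (\<forall>m. 0 \<le> F m x) \<and> incseq (\<lambda>m. F m x) \<and> (\<lambda>m. F m x) \<longlonglongrightarrow> f x) \<longrightarrow>
        incseq (\<lambda>m. N (F m)) \<and> (\<lambda>m. N (F m)) \<longlonglongrightarrow> N f) \<and>
     (\<forall>c r. r > 0 \<longrightarrow> N (indicator (ball c r)) < top)"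

definition ball_banach_fs :: "(('a::euclidean_space \<Rightarrow> real) \<Rightarrow> ennreal) \<Rightarrow> bool" where
  "ball_banach_fs N \<longleftrightarrow>
     ball_quasi_banach_fs N \<and>
     (\<forall>f g. f \<in> borel_measurable lebesgue \<longrightarrow> g \<in> borel_measurable lebesgue \<longrightarrow>
         N (\<lambda>x. f x + g x) \<le> N f + N g) \<and>
     (\<forall>c r. r > 0 \<longrightarrow> (\<exists>C::real. \<forall>f \<in> borel_measurable lebesgue.
         (\<integral>\<^sup>+x\<in>ball c r. ennreal \<bar>f x\<bar> \<partial>lebesgue) \<le> ennreal C * N f))"

text \<open>Convexification: norm of Y^p, i.e. f \<mapsto> N(|f|^p)^(1/p).\<close>
definition convexify :: "(('a \<Rightarrow> real) \<Rightarrow> ennreal) \<Rightarrow> real \<Rightarrow> ('a \<Rightarrow> real) \<Rightarrow> ennreal" where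
  "convexify N p f = epowr (N (\<lambda>x. \<bar>f x\<bar> powr p)) (1 / p)"

definition weak_norm :: "(('a \<Rightarrow> real) \<Rightarrow> ennreal) \<Rightarrow> ('a \<Rightarrow> real) \<Rightarrow> ennreal" where
  "weak_norm N f = (SUP \<alpha>\<in>{0<..}. ennreal \<alpha> * N (indicator {x. \<bar>f x\<bar> > \<alpha>}))"

definition Linf_norm :: "('a::euclidean_space \<Rightarrow> real) \<Rightarrow> ennreal" where
  "Linf_norm f = Inf {C. AE x in lebesgue. ennreal \<bar>f x\<bar> \<le> C}"

definition K_fun :: "(('a::euclidean_space \<Rightarrow> real) \<Rightarrow> ennreal) \<Rightarrow> (('a \<Rightarrow> real) \<Rightarrow> ennreal)
     \<Rightarrow> real \<Rightarrow> ('a \<Rightarrow> real) \<Rightarrow> ennreal" where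
  "K_fun N0 N1 t f = Inf {N0 f0 + ennreal t * N1 f1 | f0 f1.
      f0 \<in> borel_measurable lebesgue \<and> f1 \<in> borel_measurable lebesgue \<and>
      N0 f0 < top \<and> N1 f1 < top \<and> (\<forall>x. f x = f0 x + f1 x)}"

text \<open>Norm of (X0,X1)_{\<theta>,\<infinity>}; the space is the set of f with finite norm (K is top off X0+X1).\<close>
definition interp_norm :: "(('a::euclidean_space \<Rightarrow> real) \<Rightarrow> ennreal) \<Rightarrow> (('a \<Rightarrow> real) \<Rightarrow> ennreal)
     \<Rightarrow> real \<Rightarrow> ('a \<Rightarrow> real) \<Rightarrow> ennreal" where
  "interp_norm N0 N1 \<theta> f = (SUP t\<in>{0<..}. ennreal (t powr (-\<theta>)) * K_fun N0 N1 t f)"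

end

theory Submission
  imports Defs
begin

text \<open>Write \<open>p = 1/(1-\<theta>)\<close>; both inequalities compare the \<open>K\<close>-functional \<open>K(t, f; X, L\<^sup>\<infinity>)\<close>
  with the level sets \<open>{|f| > s}\<close>, on which the norm of \<open>(WX)\<^sup>p\<close> is built.

  If \<open>K(t, f) < t s/2\<close>, then \<open>f = f\<^sub>0 + f\<^sub>1\<close> with \<open>|f\<^sub>1| \<le> s/2\<close>, so \<open>|f\<^sub>0| > s/2\<close> on \<open>{|f| > s}\<close> and
  \<open>\<parallel>1\<^bsub>{|f|>s}\<^esub>\<parallel>\<^sub>X \<le> t\<close>.  Since \<open>K(t, f) \<le> t\<^sup>\<theta> \<parallel>f\<parallel>\<^sub>\<theta>\<^sub>,\<^sub>\<infinity>\<close>, choosing \<open>t\<close> with \<open>t\<^sup>\<theta> \<parallel>f\<parallel>\<^sub>\<theta>\<^sub>,\<^sub>\<infinity> = t s/2\<close> gives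
  \<open>s\<^sup>p \<parallel>1\<^bsub>{|f|>s}\<^esub>\<parallel>\<^sub>X \<le> (2 \<parallel>f\<parallel>\<^sub>\<theta>\<^sub>,\<^sub>\<infinity>)\<^sup>p\<close>.

  Conversely, assume \<open>s\<^sup>p \<parallel>1\<^bsub>{|f|>s}\<^esub>\<parallel>\<^sub>X \<le> w\<^sup>p\<close> for all \<open>s\<close>, and split \<open>f\<close> at the height \<open>l = w t\<^sup>\<theta>\<^sup>-\<^sup>1\<close> into a part
  bounded by \<open>l\<close> and the part \<open>f 1\<^bsub>{|f|>l}\<^esub>\<close>.  The latter is the sum of its dyadic pieces on
  \<open>{2\<^sup>k l < |f| \<le> 2\<^sup>k\<^sup>+\<^sup>1 l}\<close>, of \<open>X\<close>-norm at most \<open>2 w\<^sup>p (2\<^sup>k l)\<^sup>1\<^sup>-\<^sup>p\<close>.  These pieces are disjointly supported,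
  so the convexity of \<open>X\<^bsup>1/r\<^esup>\<close> yields an \<open>r\<close>-triangle inequality for them, and as \<open>p > 1\<close> their norms
  decay geometrically; the Fatou property passes to the limit.  Altogether \<open>K(t, f) \<lesssim> w t\<^sup>\<theta>\<close>.\<close>

lemma epowr_ennreal: "0 \<le> c \<Longrightarrow> epowr (ennreal c) p = ennreal (c powr p)"
  by (simp add: epowr_def)

lemma epowr_mono: "x \<le> y \<Longrightarrow> 0 \<le> p \<Longrightarrow> epowr x p \<le> epowr y p"
  by (cases x; cases y) (auto simp: epowr_def powr_mono2 top_unique)

lemma powr_le_iff_le_powr_inverse:
  fixes x c p :: real
  assumes "0 < p" "0 \<le> x" "0 \<le> c"
  shows "x powr p \<le> c \<longleftrightarrow> x \<le> c powr (1 / p)"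
proof
  assume "x powr p \<le> c"
  then have "(x powr p) powr (1 / p) \<le> c powr (1 / p)"
    using assms by (intro powr_mono2) auto
  then show "x \<le> c powr (1 / p)"
    using assms by (simp add: powr_powr)
next
  assume "x \<le> c powr (1 / p)"
  then have "x powr p \<le> (c powr (1 / p)) powr p"
    using assms by (intro powr_mono2) auto
  then show "x powr p \<le> c"
    using assms by (simp add: powr_powr)
qed

lemma epowr_le_ennreal_iff:
  assumes "0 < p" "0 \<le> c"
  shows "epowr x p \<le> ennreal c \<longleftrightarrow> x \<le> ennreal (c powr (1 / p))"
  using assms by (cases x) (simp_all add: epowr_def powr_le_iff_le_powr_inverse top_unique)

lemma ennreal_mult_less_imp_less_divide:
  assumes "ennreal t * x < ennreal c" "0 < t"
  shows "x < ennreal (c / t)"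
proof (cases x)
  case (real y)
  with assms have "t * y < c"
    by (metis ennreal_less_iff ennreal_mult'' less_eq_real_def mult_nonneg_nonneg)
  then have "y < c / t"
    using assms(2) by (simp add: field_simps)
  with real show ?thesis
    by (simp add: ennreal_lessI)
next
  case top
  with assms show ?thesis
    by (simp add: ennreal_mult_top)
qed

lemma ennreal_le_mult_approx:
  assumes "0 < c" and approx: "\<And>w. 0 < w \<Longrightarrow> y < ennreal w \<Longrightarrow> x \<le> ennreal (c * w)"
  shows "x \<le> ennreal c * y"
proof (cases y)
  case top
  with \<open>0 < c\<close> show ?thesis
    by (simp add: ennreal_mult_top)
next
  case (real v)
  show ?thesis
  proof (rule ennreal_le_epsilon)
    fix e :: real
    assume "0 < e"
    with real \<open>0 < c\<close> have "x \<le> ennreal (c * (v + e / c))"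
      by (intro approx) (auto simp: add_nonneg_pos ennreal_lessI)
    also have "c * (v + e / c) = c * v + e"
      using \<open>0 < c\<close> by (simp add: field_simps)
    also have "ennreal (c * v + e) = ennreal c * y + ennreal e"
      using real \<open>0 < c\<close> \<open>0 < e\<close> by (simp add: ennreal_plus ennreal_mult)
    finally show "x \<le> ennreal c * y + ennreal e" .
  qed
qed

lemma sum_indicator_dyadic_annuli:
  fixes l y :: real
  assumes "0 \<le> l"
  shows "(\<Sum>k<m. indicator {2 ^ k * l <.. 2 ^ Suc k * l} y :: real) = indicator {l <.. 2 ^ m * l} y"
proof (induction m)
  case (Suc m)
  have "2 ^ m * l \<ge> l" and "2 ^ Suc m * l \<ge> 2 ^ m * l"
    using assms by (simp_all add: mult_right_mono mult_le_cancel_right1)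
  with Suc show ?case
    by (auto simp: indicator_def)
qed simp

lemma dyadic_annuli_disjoint:
  fixes l y :: real
  assumes "0 < l" "j \<noteq> k"
  shows "indicator {2 ^ j * l <.. 2 ^ Suc j * l} y * indicator {2 ^ k * l <.. 2 ^ Suc k * l} y = (0::real)"
proof (rule ccontr)
  assume "indicator {2 ^ j * l <.. 2 ^ Suc j * l} y * indicator {2 ^ k * l <.. 2 ^ Suc k * l} y \<noteq> (0::real)"
  then have "2 ^ k * l < 2 ^ Suc j * l" "2 ^ j * l < 2 ^ Suc k * l"
    by (auto simp: indicator_def split: if_splits)
  with \<open>0 < l\<close> have "k < Suc j" "j < Suc k"
    by (simp_all del: power_Suc)
  with \<open>j \<noteq> k\<close> show False
    by simp
qed

lemma weak_norm_powr:
  fixes f :: "'a \<Rightarrow> real"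
  assumes "0 < p"
  shows "weak_norm N (\<lambda>x. \<bar>f x\<bar> powr p)
    = (SUP s\<in>{0<..}. ennreal (s powr p) * N (indicator {x. s < \<bar>f x\<bar>}))"
proof -
  have image: "{0<..} = (\<lambda>s. s powr p) ` ({0<..} :: real set)"
  proof (intro equalityI subsetI)
    fix a :: real
    assume "a \<in> {0<..}"
    with assms have "a = (a powr (1 / p)) powr p" and "a powr (1 / p) \<in> {0<..}"
      by (simp_all add: powr_powr)
    then show "a \<in> (\<lambda>s. s powr p) ` {0<..}"
      by blast
  qed auto
  have level_set: "{x. s powr p < \<bar>\<bar>f x\<bar> powr p\<bar>} = {x. s < \<bar>f x\<bar>}" if "0 < s" for s
  proof -
    have "s powr p < \<bar>f x\<bar> powr p \<longleftrightarrow> s < \<bar>f x\<bar>" for x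
      using that assms powr_less_mono2[of p s "\<bar>f x\<bar>"] powr_mono2[of p "\<bar>f x\<bar>" s]
      by (meson abs_ge_zero less_eq_real_def not_less)
    then show ?thesis
      by simp
  qed
  have "weak_norm N (\<lambda>x. \<bar>f x\<bar> powr p)
      = (SUP s\<in>{0<..}. ennreal (s powr p) * N (indicator {x. s powr p < \<bar>\<bar>f x\<bar> powr p\<bar>}))"
    unfolding weak_norm_def by (subst image) (simp add: image_image)
  also have "\<dots> = (SUP s\<in>{0<..}. ennreal (s powr p) * N (indicator {x. s < \<bar>f x\<bar>}))"
    using level_set by (intro SUP_cong) auto
  finally show ?thesis .
qed

lemma convexify_weak_norm_le_iff:
  fixes f :: "'a \<Rightarrow> real"
  assumes "0 < p" "0 \<le> c"
  shows "convexify (weak_norm N) p f \<le> ennreal c \<longleftrightarrow>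
    (\<forall>s>0. ennreal (s powr p) * N (indicator {x. s < \<bar>f x\<bar>}) \<le> ennreal (c powr p))"
  using assms
  by (simp add: convexify_def epowr_le_ennreal_iff weak_norm_powr SUP_le_iff Ball_def)

lemma Linf_norm_le: "(\<And>x. \<bar>f x\<bar> \<le> c) \<Longrightarrow> Linf_norm f \<le> ennreal c"
  unfolding Linf_norm_def by (rule Inf_lower) (auto intro: ennreal_leI)

lemma AE_abs_le_of_Linf_norm_less:
  assumes "Linf_norm f < ennreal c"
  shows "AE x in lebesgue. \<bar>f x\<bar> \<le> c"
proof -
  obtain C where bound: "AE x in lebesgue. ennreal \<bar>f x\<bar> \<le> C" and "C < ennreal c"
    using assms unfolding Linf_norm_def by (auto simp: Inf_less_iff)
  from bound show ?thesis
  proof eventually_elim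
    case (elim x)
    then have "ennreal \<bar>f x\<bar> < ennreal c"
      using \<open>C < ennreal c\<close> by (rule le_less_trans)
    then show "\<bar>f x\<bar> \<le> c"
      by (simp add: ennreal_less_iff)
  qed
qed

lemma K_fun_le:
  assumes "f0 \<in> borel_measurable lebesgue" "f1 \<in> borel_measurable lebesgue"
    and "N0 f0 < top" "N1 f1 < top" "\<And>x. f x = f0 x + f1 x"
  shows "K_fun N0 N1 t f \<le> N0 f0 + ennreal t * N1 f1"
  unfolding K_fun_def using assms by (intro Inf_lower) blast

lemma K_fun_lessE:
  assumes "K_fun N0 N1 t f < c"
  obtains f0 f1 where "f0 \<in> borel_measurable lebesgue" "f1 \<in> borel_measurable lebesgue"
    and "\<And>x. f x = f0 x + f1 x" "N0 f0 + ennreal t * N1 f1 < c"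
  using assms unfolding K_fun_def by (auto simp: Inf_less_iff)

lemma interp_norm_le:
  assumes "0 \<le> c" and K: "\<And>t. 0 < t \<Longrightarrow> K_fun N0 N1 t f \<le> ennreal (c * t powr \<theta>)"
  shows "interp_norm N0 N1 \<theta> f \<le> ennreal c"
  unfolding interp_norm_def
proof (rule SUP_least)
  fix t :: real
  assume "t \<in> {0<..}"
  then have "0 < t" by simp
  then have "ennreal (t powr - \<theta>) * K_fun N0 N1 t f \<le> ennreal (t powr - \<theta>) * ennreal (c * t powr \<theta>)"
    by (intro mult_left_mono K) auto
  also have "\<dots> = ennreal c"
    using \<open>0 < t\<close> \<open>0 \<le> c\<close> by (simp add: ennreal_mult[symmetric] powr_minus field_simps)
  finally show "ennreal (t powr - \<theta>) * K_fun N0 N1 t f \<le> ennreal c" .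
qed

lemma K_fun_less_of_interp_norm_less:
  assumes "interp_norm N0 N1 \<theta> f < ennreal b" "0 < t"
  shows "K_fun N0 N1 t f < ennreal (b * t powr \<theta>)"
proof -
  have "ennreal (t powr - \<theta>) * K_fun N0 N1 t f \<le> interp_norm N0 N1 \<theta> f"
    unfolding interp_norm_def using \<open>0 < t\<close> by (intro SUP_upper) auto
  then have "K_fun N0 N1 t f < ennreal (b / t powr - \<theta>)"
    using assms by (intro ennreal_mult_less_imp_less_divide) auto
  then show ?thesis
    by (simp add: powr_minus divide_inverse)
qed

context
  fixes N :: "('a::euclidean_space \<Rightarrow> real) \<Rightarrow> ennreal"
  assumes ball_qbfs: "ball_quasi_banach_fs N"
begin

lemma N_scale: "f \<in> borel_measurable lebesgue \<Longrightarrow> N (\<lambda>x. c * f x) = ennreal \<bar>c\<bar> * N f"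
  using ball_qbfs unfolding ball_quasi_banach_fs_def quasi_banach_fs_def by blast

lemma N_mono:
  "f \<in> borel_measurable lebesgue \<Longrightarrow> g \<in> borel_measurable lebesgue \<Longrightarrow>
    (AE x in lebesgue. \<bar>g x\<bar> \<le> \<bar>f x\<bar>) \<Longrightarrow> N g \<le> N f"
  using ball_qbfs unfolding ball_quasi_banach_fs_def by blast

lemma N_monotone_convergence:
  "(\<And>m. F m \<in> borel_measurable lebesgue) \<Longrightarrow> f \<in> borel_measurable lebesgue \<Longrightarrow>
    (\<And>x m. 0 \<le> F m x) \<Longrightarrow> (\<And>x. incseq (\<lambda>m. F m x)) \<Longrightarrow> (\<And>x. (\<lambda>m. F m x) \<longlonglongrightarrow> f x) \<Longrightarrow>
    (\<lambda>m. N (F m)) \<longlonglongrightarrow> N f"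
  using ball_qbfs unfolding ball_quasi_banach_fs_def by simp

lemma N_annulus_le:
  assumes "f \<in> borel_measurable lebesgue" "0 < s" "0 \<le> A"
    and weak: "ennreal (s powr p) * N (indicator {x. s < \<bar>f x\<bar>}) \<le> ennreal A"
  shows "N (\<lambda>x. \<bar>f x\<bar> * indicator {s <.. 2 * s} \<bar>f x\<bar>) \<le> ennreal (2 * A * s powr (1 - p))"
proof -
  have "N (\<lambda>x. \<bar>f x\<bar> * indicator {s <.. 2 * s} \<bar>f x\<bar>)
      \<le> N (\<lambda>x. (2 * s) * indicator {x. s < \<bar>f x\<bar>} x)"
    using assms(1,2) by (intro N_mono) (auto simp: indicator_def)
  also have "\<dots> = ennreal (2 * s) * N (indicator {x. s < \<bar>f x\<bar>})"
    using assms(1,2) by (subst N_scale) auto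
  also have "\<dots> = ennreal (2 * s powr (1 - p)) * (ennreal (s powr p) * N (indicator {x. s < \<bar>f x\<bar>}))"
  proof -
    have "2 * s = 2 * s powr (1 - p) * s powr p"
      using \<open>0 < s\<close> by (simp add: powr_add[symmetric])
    then have "ennreal (2 * s) = ennreal (2 * s powr (1 - p)) * ennreal (s powr p)"
      using \<open>0 < s\<close> by (simp add: ennreal_mult[symmetric])
    then show ?thesis
      by (simp add: mult.assoc)
  qed
  also have "\<dots> \<le> ennreal (2 * s powr (1 - p)) * ennreal A"
    using weak by (rule mult_left_mono) simp
  also have "\<dots> = ennreal (2 * A * s powr (1 - p))"
    using \<open>0 \<le> A\<close> by (simp add: ennreal_mult[symmetric] mult_ac)
  finally show ?thesis .
qed

lemma N_level_set_le_of_K_fun_less: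
  assumes "f \<in> borel_measurable lebesgue" "0 < t" "0 < s"
    and "K_fun N Linf_norm t f < ennreal (t * s / 2)"
  shows "N (indicator {x. s < \<bar>f x\<bar>}) \<le> ennreal t"
proof -
  obtain f0 f1 where f0: "f0 \<in> borel_measurable lebesgue" "f1 \<in> borel_measurable lebesgue"
    and sum: "\<And>x. f x = f0 x + f1 x"
    and less: "N f0 + ennreal t * Linf_norm f1 < ennreal (t * s / 2)"
    using assms(4) by (rule K_fun_lessE) (rule that)
  have N_f0: "N f0 < ennreal (t * s / 2)"
    using add_increasing2[OF zero_le order_refl] less by (rule order.strict_trans1)
  have "ennreal t * Linf_norm f1 < ennreal (t * s / 2)"
    using add_increasing[OF zero_le order_refl] less by (rule order.strict_trans1)
  then have "Linf_norm f1 < ennreal (s / 2)"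
    using ennreal_mult_less_imp_less_divide \<open>0 < t\<close> by fastforce
  then have small: "AE x in lebesgue. \<bar>f1 x\<bar> \<le> s / 2"
    by (rule AE_abs_le_of_Linf_norm_less)
  \<comment> \<open>where \<open>|f|\<close> exceeds \<open>s\<close>, the bounded part \<open>f1\<close> leaves at least \<open>s/2\<close> to \<open>f0\<close>\<close>
  have "N (indicator {x. s < \<bar>f x\<bar>}) \<le> N (\<lambda>x. (2 / s) * f0 x)"
  proof (rule N_mono)
    show "AE x in lebesgue. \<bar>indicator {x. s < \<bar>f x\<bar>} x :: real\<bar> \<le> \<bar>2 / s * f0 x\<bar>"
      using small
    proof eventually_elim
      case (elim x)
      with sum[of x] \<open>0 < s\<close> show ?case
        by (auto simp: indicator_def abs_mult field_simps)
    qed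
  qed (use f0 assms(1) in auto)
  also have "\<dots> = ennreal (2 / s) * N f0"
    using f0 \<open>0 < s\<close> by (subst N_scale) auto
  also have "\<dots> \<le> ennreal (2 / s) * ennreal (t * s / 2)"
    using N_f0 by (intro mult_left_mono) auto
  also have "\<dots> = ennreal t"
    using \<open>0 < s\<close> \<open>0 < t\<close> by (simp add: ennreal_mult[symmetric])
  finally show ?thesis .
qed

lemma N_le_of_dyadic_truncations_le:
  assumes "f \<in> borel_measurable lebesgue" "0 < l"
    and bound: "\<And>m. N (\<lambda>x. \<bar>f x\<bar> * indicator {l <.. 2 ^ m * l} \<bar>f x\<bar>) \<le> B"
  shows "N (\<lambda>x. f x * indicator {l<..} \<bar>f x\<bar>) \<le> B"
proof -
  let ?g = "\<lambda>m x. \<bar>f x\<bar> * indicator {l <.. 2 ^ m * l} \<bar>f x\<bar> :: real"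
  let ?G = "\<lambda>x. \<bar>f x\<bar> * indicator {l<..} \<bar>f x\<bar> :: real"
  have meas: "?g m \<in> borel_measurable lebesgue" "?G \<in> borel_measurable lebesgue"
    "(\<lambda>x. f x * indicator {l<..} \<bar>f x\<bar>) \<in> borel_measurable lebesgue" for m
    using assms(1) by measurable
  have "(\<lambda>m. N (?g m)) \<longlonglongrightarrow> N ?G"
  proof (rule N_monotone_convergence[OF meas(1,2)])
    show "0 \<le> ?g m x" for m x
      by simp
    fix x
    show "incseq (\<lambda>m. ?g m x)"
    proof (rule incseq_SucI)
      fix m
      have "2 ^ m * l \<le> 2 ^ Suc m * l"
        using \<open>0 < l\<close> by simp
      then show "?g m x \<le> ?g (Suc m) x"
        by (auto simp: indicator_def)
    qed
    obtain M where "\<bar>f x\<bar> / l < 2 ^ M"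
      using real_arch_pow[of 2 "\<bar>f x\<bar> / l"] by auto
    then have "\<bar>f x\<bar> < 2 ^ M * l"
      using \<open>0 < l\<close> by (simp add: field_simps)
    moreover have "2 ^ M * l \<le> 2 ^ m * l" if "M \<le> m" for m
      using that \<open>0 < l\<close> by (simp add: power_increasing)
    ultimately have "\<bar>f x\<bar> \<le> 2 ^ m * l" if "M \<le> m" for m
      using that by (meson less_le_trans less_imp_le)
    then have "\<forall>\<^sub>F m in sequentially. ?g m x = ?G x"
      by (auto simp: eventually_sequentially indicator_def)
    then show "(\<lambda>m. ?g m x) \<longlonglongrightarrow> ?G x"
      by (rule tendsto_eventually)
  qed
  then have "N ?G \<le> B"
    using bound by (intro LIMSEQ_le_const2) auto
  moreover have "N (\<lambda>x. f x * indicator {l<..} \<bar>f x\<bar>) \<le> N ?G"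
    using meas by (intro N_mono) (auto simp: abs_mult)
  ultimately show ?thesis
    by simp
qed

end

context
  fixes N :: "('a::euclidean_space \<Rightarrow> real) \<Rightarrow> ennreal" and r :: real
  assumes "0 < r" and ball_bfs: "ball_banach_fs (convexify N (1 / r))"
begin

lemma epowr_N_zero: "epowr (N (\<lambda>x. 0)) r = 0"
proof -
  have "\<forall>f c. f \<in> borel_measurable lebesgue \<longrightarrow>
      convexify N (1 / r) (\<lambda>x. c * f x) = ennreal \<bar>c\<bar> * convexify N (1 / r) f"
    using ball_bfs unfolding ball_banach_fs_def ball_quasi_banach_fs_def quasi_banach_fs_def
    by (elim conjE)
  from this[rule_format, of "\<lambda>x. 0" 0] \<open>0 < r\<close> show ?thesis
    by (simp add: convexify_def)
qed

text \<open>For disjointly supported \<open>g, h \<ge> 0\<close> we have \<open>(g\<^sup>r + h\<^sup>r)\<^bsup>1/r\<^esup> = g + h\<close>, so the triangle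
  inequality of the \<open>1/r\<close>-convexification becomes an \<open>r\<close>-triangle inequality for \<open>N\<close>.\<close>
lemma epowr_N_add_disjoint_le:
  assumes "g \<in> borel_measurable lebesgue" "h \<in> borel_measurable lebesgue"
    and "\<And>x. 0 \<le> g x" "\<And>x. 0 \<le> h x" "\<And>x. g x * h x = 0"
  shows "epowr (N (\<lambda>x. g x + h x)) r \<le> epowr (N g) r + epowr (N h) r"
proof -
  let ?N' = "convexify N (1 / r)"
  have "(\<lambda>x. g x powr r) \<in> borel_measurable lebesgue" "(\<lambda>x. h x powr r) \<in> borel_measurable lebesgue"
    using assms(1,2) by measurable
  then have "?N' (\<lambda>x. g x powr r + h x powr r) \<le> ?N' (\<lambda>x. g x powr r) + ?N' (\<lambda>x. h x powr r)"
    using ball_bfs unfolding ball_banach_fs_def by blast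
  moreover have "\<bar>g x powr r + h x powr r\<bar> powr (1 / r) = g x + h x" for x
    using assms(3-5)[of x] \<open>0 < r\<close> by (cases "g x = 0") (auto simp: powr_powr)
  moreover have "\<bar>u powr r\<bar> powr (1 / r) = u" if "0 \<le> u" for u
    using that \<open>0 < r\<close> by (cases "u = 0") (auto simp: powr_powr)
  ultimately show ?thesis
    using assms(3,4) \<open>0 < r\<close> by (simp add: convexify_def)
qed

lemma epowr_N_sum_disjoint_le:
  fixes u :: "nat \<Rightarrow> 'a \<Rightarrow> real"
  assumes "\<And>k. u k \<in> borel_measurable lebesgue" "\<And>k x. 0 \<le> u k x"
    and "\<And>j k x. j \<noteq> k \<Longrightarrow> u j x * u k x = 0"
  shows "epowr (N (\<lambda>x. \<Sum>k<m. u k x)) r \<le> (\<Sum>k<m. epowr (N (u k)) r)"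
proof (induction m)
  case 0
  show ?case
    by (simp add: epowr_N_zero)
next
  case (Suc m)
  have "(\<Sum>k<m. u k x) * u m x = 0" for x
    using assms(3) by (auto simp: sum_distrib_right intro!: sum.neutral)
  then have "epowr (N (\<lambda>x. (\<Sum>k<m. u k x) + u m x)) r
      \<le> epowr (N (\<lambda>x. \<Sum>k<m. u k x)) r + epowr (N (u m)) r"
    using assms(1,2) by (intro epowr_N_add_disjoint_le) (auto intro: sum_nonneg)
  with Suc.IH show ?case
    by (simp add: add_right_mono order_trans)
qed

lemma N_sum_disjoint_geometric_le:
  fixes u :: "nat \<Rightarrow> 'a \<Rightarrow> real"
  assumes "\<And>k. u k \<in> borel_measurable lebesgue" "\<And>k x. 0 \<le> u k x"
    and "\<And>j k x. j \<noteq> k \<Longrightarrow> u j x * u k x = 0"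
    and "0 \<le> c" "0 \<le> q" "q < 1" and pieces: "\<And>k. epowr (N (u k)) r \<le> ennreal (c * q ^ k)"
  shows "N (\<lambda>x. \<Sum>k<m. u k x) \<le> ennreal ((c / (1 - q)) powr (1 / r))"
proof -
  have "epowr (N (\<lambda>x. \<Sum>k<m. u k x)) r \<le> (\<Sum>k<m. ennreal (c * q ^ k))"
    using epowr_N_sum_disjoint_le[OF assms(1-3)] pieces by (rule order_trans[OF _ sum_mono])
  also have "\<dots> = ennreal (c * (\<Sum>k<m. q ^ k))"
    using assms(4,5) by (simp add: sum_distrib_left)
  also have "\<dots> \<le> ennreal (c * (1 / (1 - q)))"
    using assms(4-6) by (intro ennreal_leI mult_left_mono) (auto simp: sum_gp_strict divide_right_mono)
  finally show ?thesis
    using \<open>0 < r\<close> assms(4-6) by (simp add: epowr_le_ennreal_iff)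
qed

end

lemma N_dyadic_truncation_le:
  fixes N :: "('a::euclidean_space \<Rightarrow> real) \<Rightarrow> ennreal"
  assumes ball_qbfs: "ball_quasi_banach_fs N"
    and "0 < r" and ball_bfs: "ball_banach_fs (convexify N (1 / r))"
    and f: "f \<in> borel_measurable lebesgue" and "1 < p" "0 < l" "0 \<le> A"
    and weak: "\<And>s. 0 < s \<Longrightarrow> ennreal (s powr p) * N (indicator {x. s < \<bar>f x\<bar>}) \<le> ennreal A"
  shows "N (\<lambda>x. \<bar>f x\<bar> * indicator {l <.. 2 ^ m * l} \<bar>f x\<bar>)
    \<le> ennreal (2 * (1 - 2 powr ((1 - p) * r)) powr (- 1 / r) * A * l powr (1 - p))"
proof -
  define q where "q = 2 powr ((1 - p) * r)"
  have "0 < q" "q < 1"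
    using \<open>1 < p\<close> \<open>0 < r\<close> by (auto simp: q_def mult_neg_pos intro: powr_less_one)
  define c where "c = (2 * A * l powr (1 - p)) powr r"
  define u where "u k x = \<bar>f x\<bar> * indicator {2 ^ k * l <.. 2 ^ Suc k * l} \<bar>f x\<bar>" for k x
  have u_meas: "u k \<in> borel_measurable lebesgue" for k
    unfolding u_def using f by measurable
  have "u j x * u k x = 0" if "j \<noteq> k" for j k x
    using dyadic_annuli_disjoint[OF \<open>0 < l\<close> that, of "\<bar>f x\<bar>"] by (auto simp: u_def)
  moreover have "epowr (N (u k)) r \<le> ennreal (c * q ^ k)" for k
  proof -
    define s where "s = 2 ^ k * l"
    have "0 < s"
      using \<open>0 < l\<close> by (simp add: s_def)
    have "u k = (\<lambda>x. \<bar>f x\<bar> * indicator {s <.. 2 * s} \<bar>f x\<bar>)"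
      by (simp add: u_def s_def fun_eq_iff mult.assoc)
    then have "N (u k) \<le> ennreal (2 * A * s powr (1 - p))"
      using N_annulus_le[OF ball_qbfs f \<open>0 < s\<close> \<open>0 \<le> A\<close> weak[OF \<open>0 < s\<close>]] by simp
    then have "epowr (N (u k)) r \<le> epowr (ennreal (2 * A * s powr (1 - p))) r"
      using \<open>0 < r\<close> by (intro epowr_mono) auto
    also have "\<dots> = ennreal ((2 * A * s powr (1 - p)) powr r)"
      using \<open>0 \<le> A\<close> by (intro epowr_ennreal) simp
    also have "(2 * A * s powr (1 - p)) powr r = c * q ^ k"
      using \<open>0 < l\<close> \<open>0 \<le> A\<close>
      by (simp add: c_def q_def s_def powr_mult powr_powr powr_realpow[symmetric] mult_ac)
    finally show ?thesis .
  qed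
  ultimately have "N (\<lambda>x. \<Sum>k<m. u k x) \<le> ennreal ((c / (1 - q)) powr (1 / r))"
    using \<open>0 < q\<close> \<open>q < 1\<close>
    by (intro N_sum_disjoint_geometric_le[OF \<open>0 < r\<close> ball_bfs u_meas]) (auto simp: u_def c_def)
  moreover have "(\<lambda>x. \<Sum>k<m. u k x) = (\<lambda>x. \<bar>f x\<bar> * indicator {l <.. 2 ^ m * l} \<bar>f x\<bar>)"
    using sum_indicator_dyadic_annuli[OF less_imp_le[OF \<open>0 < l\<close>], where m = m]
    by (simp add: u_def sum_distrib_left[symmetric] del: power_Suc)
  moreover have "(c / (1 - q)) powr (1 / r) = 2 * (1 - q) powr (- 1 / r) * A * l powr (1 - p)"
  proof -
    have "(c / (1 - q)) powr (1 / r) = c powr (1 / r) / (1 - q) powr (1 / r)"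
      using \<open>q < 1\<close> by (simp add: c_def powr_divide)
    moreover have "c powr (1 / r) = 2 * A * l powr (1 - p)"
      using \<open>0 < r\<close> \<open>0 \<le> A\<close> by (simp add: c_def powr_powr)
    moreover have "(1 - q) powr (- 1 / r) = 1 / (1 - q) powr (1 / r)"
      by (simp add: powr_minus_divide)
    ultimately show ?thesis
      by simp
  qed
  ultimately show ?thesis
    by (simp add: q_def)
qed

lemma K_fun_le_of_weak_type:
  fixes N :: "('a::euclidean_space \<Rightarrow> real) \<Rightarrow> ennreal"
  assumes ball_qbfs: "ball_quasi_banach_fs N"
    and "0 < r" and ball_bfs: "ball_banach_fs (convexify N (1 / r))"
    and "0 < \<theta>" "\<theta> < 1" and p: "p = 1 / (1 - \<theta>)" and f: "f \<in> borel_measurable lebesgue"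
    and "0 < w" "0 < t"
    and weak: "\<And>s. 0 < s \<Longrightarrow> ennreal (s powr p) * N (indicator {x. s < \<bar>f x\<bar>}) \<le> ennreal (w powr p)"
  shows "K_fun N Linf_norm t f
    \<le> ennreal ((2 * (1 - 2 powr ((1 - p) * r)) powr (- 1 / r) + 1) * w * t powr \<theta>)"
proof -
  define C where "C = 2 * (1 - 2 powr ((1 - p) * r)) powr (- 1 / r)"
  have "0 \<le> C"
    by (simp add: C_def)
  have "1 < p" and p_\<theta>: "(\<theta> - 1) * (1 - p) = \<theta>"
    using \<open>0 < \<theta>\<close> \<open>\<theta> < 1\<close> by (simp_all add: p field_simps)
  \<comment> \<open>cut \<open>f\<close> at the height \<open>l\<close> where the two terms of the \<open>K\<close>-functional balance\<close>
  define l where "l = w * t powr (\<theta> - 1)"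
  have "0 < l"
    using \<open>0 < w\<close> \<open>0 < t\<close> by (simp add: l_def)
  define f0 where "f0 x = f x * indicator {l<..} \<bar>f x\<bar>" for x
  have f0_meas: "f0 \<in> borel_measurable lebesgue" and f1_meas: "(\<lambda>x. f x - f0 x) \<in> borel_measurable lebesgue"
    unfolding f0_def using f by measurable
  have balance: "w powr p * l powr (1 - p) = w * t powr \<theta>"
    using \<open>0 < w\<close> \<open>0 < t\<close>
    by (simp add: l_def powr_mult powr_powr p_\<theta> powr_add[symmetric])
  have "N f0 \<le> ennreal (C * w powr p * l powr (1 - p))"
    unfolding f0_def C_def
    using N_dyadic_truncation_le[OF ball_qbfs \<open>0 < r\<close> ball_bfs f \<open>1 < p\<close> \<open>0 < l\<close> _ weak]
    by (intro N_le_of_dyadic_truncations_le[OF ball_qbfs f \<open>0 < l\<close>]) (simp add: mult.assoc)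
  also have "C * w powr p * l powr (1 - p) = C * (w * t powr \<theta>)"
    using balance by (simp add: mult.assoc)
  finally have N_f0: "N f0 \<le> ennreal (C * (w * t powr \<theta>))" .
  have Linf_f1: "Linf_norm (\<lambda>x. f x - f0 x) \<le> ennreal l"
    using \<open>0 < l\<close> by (intro Linf_norm_le) (simp add: f0_def indicator_def)
  have "K_fun N Linf_norm t f \<le> N f0 + ennreal t * Linf_norm (\<lambda>x. f x - f0 x)"
    using le_less_trans[OF N_f0 ennreal_less_top] le_less_trans[OF Linf_f1 ennreal_less_top]
    by (intro K_fun_le f0_meas f1_meas) auto
  also have "\<dots> \<le> ennreal (C * (w * t powr \<theta>)) + ennreal t * ennreal l"
    using N_f0 Linf_f1 by (intro add_mono mult_left_mono) auto
  also have "\<dots> = ennreal ((C + 1) * w * t powr \<theta>)"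
  proof -
    have "t * l = w * t powr \<theta>"
      using \<open>0 < t\<close> by (simp add: l_def powr_mult_base mult.left_commute)
    then have "C * (w * t powr \<theta>) + t * l = (C + 1) * w * t powr \<theta>"
      by (simp add: algebra_simps)
    moreover have "ennreal (C * (w * t powr \<theta>)) + ennreal t * ennreal l
        = ennreal (C * (w * t powr \<theta>) + t * l)"
      using \<open>0 \<le> C\<close> \<open>0 < t\<close> \<open>0 < l\<close> \<open>0 < w\<close> by (simp add: ennreal_mult ennreal_plus)
    ultimately show ?thesis
      by simp
  qed
  finally show ?thesis
    unfolding C_def .
qed

lemma interp_norm_le_convexify_weak_norm:
  fixes N :: "('a::euclidean_space \<Rightarrow> real) \<Rightarrow> ennreal"
  assumes ball_qbfs: "ball_quasi_banach_fs N"
    and "0 < r" and ball_bfs: "ball_banach_fs (convexify N (1 / r))"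
    and "0 < \<theta>" "\<theta> < 1" and p: "p = 1 / (1 - \<theta>)" and f: "f \<in> borel_measurable lebesgue"
  shows "interp_norm N Linf_norm \<theta> f
    \<le> ennreal (2 * (1 - 2 powr ((1 - p) * r)) powr (- 1 / r) + 1) * convexify (weak_norm N) p f"
proof (rule ennreal_le_mult_approx)
  define C where "C = 2 * (1 - 2 powr ((1 - p) * r)) powr (- 1 / r) + 1"
  have "0 < p"
    using \<open>\<theta> < 1\<close> by (simp add: p)
  show "0 < C"
    by (simp add: C_def add_nonneg_pos)
  fix w :: real
  assume "0 < w" and "convexify (weak_norm N) p f < ennreal w"
  then have "convexify (weak_norm N) p f \<le> ennreal w"
    by simp
  then have weak: "\<forall>s>0. ennreal (s powr p) * N (indicator {x. s < \<bar>f x\<bar>}) \<le> ennreal (w powr p)"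
    using \<open>0 < p\<close> \<open>0 < w\<close> convexify_weak_norm_le_iff[of p w N f] by simp
  show "interp_norm N Linf_norm \<theta> f \<le> ennreal (C * w)"
  proof (rule interp_norm_le)
    show "K_fun N Linf_norm t f \<le> ennreal (C * w * t powr \<theta>)" if "0 < t" for t
      unfolding C_def using weak
      by (intro K_fun_le_of_weak_type[OF ball_qbfs \<open>0 < r\<close> ball_bfs \<open>0 < \<theta>\<close> \<open>\<theta> < 1\<close> p f \<open>0 < w\<close> that]) auto
  qed (use \<open>0 < C\<close> \<open>0 < w\<close> in simp)
qed

lemma convexify_weak_norm_le_interp_norm:
  fixes N :: "('a::euclidean_space \<Rightarrow> real) \<Rightarrow> ennreal"
  assumes "ball_quasi_banach_fs N"
    and "0 < \<theta>" "\<theta> < 1" and p: "p = 1 / (1 - \<theta>)" and f: "f \<in> borel_measurable lebesgue"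
  shows "convexify (weak_norm N) p f \<le> ennreal 2 * interp_norm N Linf_norm \<theta> f"
proof (rule ennreal_le_mult_approx)
  have "0 < p" and p_\<theta>: "p * \<theta> = p - 1"
    using \<open>0 < \<theta>\<close> \<open>\<theta> < 1\<close> by (simp_all add: p field_simps)
  fix b :: real
  assume "0 < b" and less: "interp_norm N Linf_norm \<theta> f < ennreal b"
  have "ennreal (s powr p) * N (indicator {x. s < \<bar>f x\<bar>}) \<le> ennreal ((2 * b) powr p)" if "0 < s" for s
  proof -
    define t where "t = (2 * b / s) powr p"
    have "0 < t"
      using \<open>0 < b\<close> \<open>0 < s\<close> by (simp add: t_def)
    have "t powr \<theta> = (2 * b / s) powr (p - 1)"
      unfolding t_def powr_powr p_\<theta> ..
    then have "b * t powr \<theta> = t * s / 2"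
      using \<open>0 < b\<close> \<open>0 < s\<close> by (simp add: t_def powr_diff field_simps)
    with K_fun_less_of_interp_norm_less[OF less \<open>0 < t\<close>]
    have "K_fun N Linf_norm t f < ennreal (t * s / 2)"
      by (simp only:)
    then have "N (indicator {x. s < \<bar>f x\<bar>}) \<le> ennreal t"
      by (rule N_level_set_le_of_K_fun_less[OF assms(1) f \<open>0 < t\<close> \<open>0 < s\<close>])
    then have "ennreal (s powr p) * N (indicator {x. s < \<bar>f x\<bar>}) \<le> ennreal (s powr p) * ennreal t"
      by (rule mult_left_mono) simp
    also have "\<dots> = ennreal (s powr p * t)"
      using \<open>0 < t\<close> by (simp add: ennreal_mult)
    also have "s powr p * t = (2 * b) powr p"
      using \<open>0 < b\<close> \<open>0 < s\<close> by (simp add: t_def powr_mult[symmetric])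
    finally show ?thesis .
  qed
  then show "convexify (weak_norm N) p f \<le> ennreal (2 * b)"
    using \<open>0 < p\<close> \<open>0 < b\<close> by (simp add: convexify_weak_norm_le_iff)
qed simp

theorem theorem4p1:
  fixes N :: "('a::euclidean_space \<Rightarrow> real) \<Rightarrow> ennreal" and \<theta> :: real
  assumes "ball_quasi_banach_fs N"
    and "0 < \<theta>" and "\<theta> < 1"
    and "\<exists>r>0. ball_banach_fs (convexify N (1 / r))"
  shows "\<exists>C::real. C > 0 \<and>
    (\<forall>f \<in> borel_measurable lebesgue.
       interp_norm N Linf_norm \<theta> f \<le> ennreal C * convexify (weak_norm N) (1 / (1 - \<theta>)) f \<and>
       convexify (weak_norm N) (1 / (1 - \<theta>)) f \<le> ennreal C * interp_norm N Linf_norm \<theta> f)"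
proof -
  obtain r where "0 < r" and ball_bfs: "ball_banach_fs (convexify N (1 / r))"
    using assms(4) by blast
  define C1 where "C1 = 2 * (1 - 2 powr ((1 - 1 / (1 - \<theta>)) * r)) powr (- 1 / r) + 1"
  define C where "C = max C1 2"
  show ?thesis
  proof (intro exI[of _ C] conjI ballI)
    show "0 < C"
      by (simp add: C_def)
    fix f :: "'a \<Rightarrow> real"
    assume f: "f \<in> borel_measurable lebesgue"
    have "interp_norm N Linf_norm \<theta> f \<le> ennreal C1 * convexify (weak_norm N) (1 / (1 - \<theta>)) f"
      unfolding C1_def
      by (rule interp_norm_le_convexify_weak_norm[OF assms(1) \<open>0 < r\<close> ball_bfs assms(2,3) refl f])
    also have "\<dots> \<le> ennreal C * convexify (weak_norm N) (1 / (1 - \<theta>)) f"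
      by (intro mult_right_mono ennreal_leI) (simp_all add: C_def)
    finally show "interp_norm N Linf_norm \<theta> f \<le> ennreal C * convexify (weak_norm N) (1 / (1 - \<theta>)) f" .
    have "convexify (weak_norm N) (1 / (1 - \<theta>)) f \<le> ennreal 2 * interp_norm N Linf_norm \<theta> f"
      by (rule convexify_weak_norm_le_interp_norm[OF assms(1-3) refl f])
    also have "\<dots> \<le> ennreal C * interp_norm N Linf_norm \<theta> f"
      by (intro mult_right_mono ennreal_leI) (simp_all add: C_def)
    finally show "convexify (weak_norm N) (1 / (1 - \<theta>)) f \<le> ennreal C * interp_norm N Linf_norm \<theta> f" .
  qed
qed

end
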